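(* There exists a computable partial function $U$ (from pairs of binary strings to binary strings) such that $\mathrm{KS}_U$ is minimal up to an additive constant, i.e. for every computable partial function $V$ of two string arguments there is a constant $c$ with $\mathrm{KS}_U(y\mid x)\le \mathrm{KS}_V(y\mid x)+c$ for all strings $x,y$, and nevertheless $E_U(x,y)=\infty$ for some binary strings $x,y$ (so $E_U$ is not minimal up to an additive constant among the functions $E_V$).
   Context: For a computable partial function $U(p,x)$ of two binary-string arguments with binary-string values, $\mathrm{KS}_U(y\mid x)=\min\{|p|: U(p,x)=y\}$ and $E_U(x,y)=\min\{|p| : U(p,x)=y \text{ and } U(p,y)=x\}$, where $|p|$ is the length of $p$ and $\min\emptyset=\infty$. *)

theory Defs
  imports Main "HOL-Library.Extended_Nat"
begin

datatype rf = Zero | Succ | Proj nat | Comp rf "rf list" | Prim rf rf | Mu rf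

inductive eval :: "rf \<Rightarrow> nat list \<Rightarrow> nat \<Rightarrow> bool" where
  zero: "eval Zero xs 0"
| succ: "eval Succ (x # xs) (Suc x)"
| proj: "i < length xs \<Longrightarrow> eval (Proj i) xs (xs ! i)"
| comp: "list_all2 (\<lambda>g v. eval g xs v) gs vs \<Longrightarrow> eval f vs v \<Longrightarrow> eval (Comp f gs) xs v"
| prim0: "eval f xs v \<Longrightarrow> eval (Prim f g) (0 # xs) v"
| primS: "eval (Prim f g) (n # xs) r \<Longrightarrow> eval g (r # n # xs) v \<Longrightarrow> eval (Prim f g) (Suc n # xs) v"
| mu: "eval f (n # xs) 0 \<Longrightarrow> (\<forall>m<n. \<exists>w. w > 0 \<and> eval f (m # xs) w) \<Longrightarrow> eval (Mu f) xs n"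

type_synonym bstr = "bool list"

fun enc :: "bstr \<Rightarrow> nat" where
  "enc [] = 0"
| "enc (b # xs) = 2 * enc xs + (if b then 2 else 1)"

definition computable2 :: "(bstr \<Rightarrow> bstr \<Rightarrow> bstr option) \<Rightarrow> bool" where
  "computable2 U \<longleftrightarrow> (\<exists>f. \<forall>p x y. U p x = Some y \<longleftrightarrow> eval f [enc p, enc x] (enc y))"

definition KS :: "(bstr \<Rightarrow> bstr \<Rightarrow> bstr option) \<Rightarrow> bstr \<Rightarrow> bstr \<Rightarrow> enat" where
  "KS U y x = (INF p \<in> {p. U p x = Some y}. enat (length p))"

definition E :: "(bstr \<Rightarrow> bstr \<Rightarrow> bstr option) \<Rightarrow> bstr \<Rightarrow> bstr \<Rightarrow> enat" where
  "E U x y = (INF p \<in> {p. U p x = Some y \<and> U p y = Some x}. enat (length p))"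

end

theory Submission
  imports Defs
begin

text \<open>The universal function is built as in Kleene's normal form theorem. A computation
  \<open>eval f xs v\<close> is certified by a finite trace of such claims, each following from earlier ones
  by one rule of \<^const>\<open>eval\<close>, and validity of a coded trace is a total recursive predicate.
  On a program \<open>b 1\<^sup>k 0 q\<close> and input \<open>x\<close>, \<open>universal\<close> searches for a trace deriving a value
  of the program with code \<open>k\<close> on \<open>(q, x)\<close> and returns that value; so it simulates a
  function computed by the program with code \<open>k\<close> at the cost of \<open>k + 2\<close> extra bits.
  The leading bit \<open>b\<close> is a flag: \<open>b = 1\<close> makes \<open>universal\<close> undefined on input \<open>[True]\<close> and
  \<open>b = 0\<close> on input \<open>[]\<close>. A simulating program can always choose the flag that admits its
  input, but no single program is defined on both \<open>[]\<close> and \<open>[True]\<close>, so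
  \<open>E universal [] [True] = \<infinity>\<close>.\<close>

inductive_cases eval_ZeroE: "eval Zero xs v"
inductive_cases eval_SuccE: "eval Succ xs v"
inductive_cases eval_ProjE: "eval (Proj i) xs v"
inductive_cases eval_CompE: "eval (Comp f gs) xs v"
inductive_cases eval_PrimE: "eval (Prim f g) xs v"
inductive_cases eval_MuE: "eval (Mu f) xs v"

lemma eval_deterministic: "eval f xs v \<Longrightarrow> eval f xs v' \<Longrightarrow> v' = v"
proof (induction arbitrary: v' rule: eval.induct)
  case (comp xs gs vs f v)
  from comp.prems obtain vs' where vs': "list_all2 (\<lambda>g v. eval g xs v) gs vs'" and "eval f vs' v'"
    by (blast elim: eval_CompE)
  moreover have "vs' = vs"
    using comp.IH(1) vs' by (auto simp: list_all2_conv_all_nth list_eq_iff_nth_eq)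
  ultimately show ?case using comp.IH(2) by blast
next
  case (mu f n xs)
  from mu.prems have "eval f (v' # xs) 0" and "\<forall>m<v'. \<exists>w>0. eval f (m # xs) w"
    by (blast elim: eval_MuE)+
  \<comment> \<open>at the smaller of \<open>n\<close> and \<open>v'\<close>, \<open>f\<close> would take both the value 0 and a positive value\<close>
  with mu.IH show ?case
    by (metis linorder_neqE_nat less_numeral_extra(3))
qed (blast elim: eval_ZeroE eval_SuccE eval_ProjE eval_PrimE)+

section \<open>Total recursive functions\<close>

definition arg :: "nat \<Rightarrow> nat list \<Rightarrow> nat" where
  "arg i xs = (if i < length xs then xs ! i else 0)"

lemma arg_Cons_0 [simp]: "arg 0 (x # xs) = x"
  by (simp add: arg_def)

lemma arg_Cons_Suc [simp]: "arg (Suc i) (x # xs) = arg i xs"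
  by (simp add: arg_def)

lemma arg_Cons_numeral [simp]: "arg (numeral k) (x # xs) = arg (pred_numeral k) xs"
  by (simp add: numeral_eq_Suc)

lemma arg_tl [simp]: "arg i (tl xs) = arg (Suc i) xs"
  by (cases xs) (auto simp: arg_def)

definition total_rec :: "nat \<Rightarrow> (nat list \<Rightarrow> nat) \<Rightarrow> bool" where
  "total_rec n F \<longleftrightarrow> (\<exists>f. \<forall>xs. length xs = n \<longrightarrow> eval f xs (F xs))"

definition total_rec_pred :: "nat \<Rightarrow> (nat list \<Rightarrow> bool) \<Rightarrow> bool" where
  "total_rec_pred n P \<longleftrightarrow> total_rec n (\<lambda>xs. if P xs then 1 else 0)"

lemma total_rec_cong:
  "total_rec n F \<Longrightarrow> (\<And>xs. length xs = n \<Longrightarrow> F xs = G xs) \<Longrightarrow> total_rec n G"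
  unfolding total_rec_def by metis

lemma total_rec_proj: "i < n \<Longrightarrow> total_rec n (arg i)"
  unfolding total_rec_def arg_def by (auto intro: exI[of _ "Proj i"] eval.proj)

lemma total_rec_compose:
  assumes "total_rec (length Gs) F" and "\<forall>G\<in>set Gs. total_rec n G"
  shows "total_rec n (\<lambda>xs. F (map (\<lambda>G. G xs) Gs))"
proof -
  obtain f where f: "\<forall>ys. length ys = length Gs \<longrightarrow> eval f ys (F ys)"
    using assms(1) unfolding total_rec_def by blast
  obtain g where g: "\<forall>G\<in>set Gs. \<forall>xs. length xs = n \<longrightarrow> eval (g G) xs (G xs)"
    using bchoice[OF assms(2)[unfolded total_rec_def]] by blast
  have "eval (Comp f (map g Gs)) xs (F (map (\<lambda>G. G xs) Gs))" if "length xs = n" for xs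
    using that f g by (intro eval.comp[where vs = "map (\<lambda>G. G xs) Gs"]) (auto simp: list_all2_conv_all_nth)
  then show ?thesis
    unfolding total_rec_def by blast
qed

lemma total_rec_compose1:
  assumes "total_rec (Suc 0) (\<lambda>ys. F (arg 0 ys))" and "total_rec n G"
  shows "total_rec n (\<lambda>xs. F (G xs))"
proof -
  have "total_rec n (\<lambda>xs. (\<lambda>ys. F (arg 0 ys)) (map (\<lambda>G. G xs) [G]))"
    using assms by (intro total_rec_compose) simp_all
  then show ?thesis by (simp add: arg_def)
qed

lemma total_rec_compose2:
  assumes "total_rec (Suc (Suc 0)) (\<lambda>ys. F (arg 0 ys) (arg 1 ys))" and "total_rec n G" and "total_rec n H"
  shows "total_rec n (\<lambda>xs. F (G xs) (H xs))"
proof -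
  have "total_rec n (\<lambda>xs. (\<lambda>ys. F (arg 0 ys) (arg 1 ys)) (map (\<lambda>G. G xs) [G, H]))"
    using assms by (intro total_rec_compose) simp_all
  then show ?thesis by (simp add: arg_def)
qed

lemma total_rec_Suc:
  assumes "total_rec n G"
  shows "total_rec n (\<lambda>xs. Suc (G xs))"
proof -
  have "total_rec (Suc 0) (\<lambda>ys. Suc (arg 0 ys))"
    unfolding total_rec_def by (rule exI[of _ Succ]) (auto simp: length_Suc_conv intro: eval.succ)
  then show ?thesis using assms by (rule total_rec_compose1)
qed

lemma total_rec_const: "total_rec n (\<lambda>xs. k)"
proof (induction k)
  case 0
  show ?case unfolding total_rec_def by (auto intro: eval.zero)
next
  case (Suc k)
  then show ?case by (rule total_rec_Suc)
qed

lemma total_rec_prim_rec: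
  assumes "total_rec n G" and "total_rec (Suc (Suc n)) H"
    and "\<And>xs. length xs = n \<Longrightarrow> F (0 # xs) = G xs"
    and "\<And>y xs. length xs = n \<Longrightarrow> F (Suc y # xs) = H (F (y # xs) # y # xs)"
  shows "total_rec (Suc n) F"
proof -
  obtain g where g: "\<forall>xs. length xs = n \<longrightarrow> eval g xs (G xs)"
    using assms(1) unfolding total_rec_def by blast
  obtain h where h: "\<forall>xs. length xs = Suc (Suc n) \<longrightarrow> eval h xs (H xs)"
    using assms(2) unfolding total_rec_def by blast
  have "eval (Prim g h) (y # xs) (F (y # xs))" if "length xs = n" for y xs
    using that by (induction y) (auto simp: assms(3,4) g h intro: eval.prim0 eval.primS)
  then show ?thesis
    unfolding total_rec_def by (auto simp: length_Suc_conv)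
qed

lemma total_rec_minimize:
  assumes "total_rec (Suc n) F" and "\<And>xs. length xs = n \<Longrightarrow> \<exists>m. F (m # xs) = 0"
  shows "total_rec n (\<lambda>xs. LEAST m. F (m # xs) = 0)"
proof -
  obtain f where f: "\<forall>ys. length ys = Suc n \<longrightarrow> eval f ys (F ys)"
    using assms(1) unfolding total_rec_def by blast
  have "eval (Mu f) xs (LEAST m. F (m # xs) = 0)" if "length xs = n" for xs
  proof (rule eval.mu)
    show "eval f ((LEAST m. F (m # xs) = 0) # xs) 0"
      using f[rule_format, of "(LEAST m. F (m # xs) = 0) # xs"] that LeastI_ex[OF assms(2)[OF that]]
      by simp
    show "\<forall>m<(LEAST m. F (m # xs) = 0). \<exists>w>0. eval f (m # xs) w"
    proof (intro allI impI)
      fix m assume "m < (LEAST m. F (m # xs) = 0)"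
      then have "F (m # xs) > 0" using not_less_Least by blast
      then show "\<exists>w>0. eval f (m # xs) w" using f that by auto
    qed
  qed
  then show ?thesis
    unfolding total_rec_def by blast
qed

lemma total_rec_drop_arg:
  assumes "total_rec n F"
  shows "total_rec (Suc n) (\<lambda>ys. F (tl ys))"
proof -
  let ?Gs = "map (\<lambda>i. arg (Suc i)) [0..<n]"
  have "total_rec (Suc n) (\<lambda>ys. F (map (\<lambda>G. G ys) ?Gs))"
    using assms by (intro total_rec_compose) (auto intro!: total_rec_proj)
  moreover have "map (\<lambda>G. G ys) ?Gs = tl ys" if "length ys = Suc n" for ys :: "nat list"
    using that by (auto simp: arg_def nth_tl intro: nth_equalityI)
  ultimately show ?thesis
    by (elim total_rec_cong) simp
qed

lemma total_rec_Cons_arg: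
  assumes "total_rec (Suc n) F" and "total_rec n G"
  shows "total_rec n (\<lambda>xs. F (G xs # xs))"
proof -
  let ?Gs = "G # map arg [0..<n]"
  have "total_rec n (\<lambda>xs. F (map (\<lambda>G. G xs) ?Gs))"
    using assms by (intro total_rec_compose) (auto intro!: total_rec_proj)
  moreover have "map (\<lambda>G. G xs) ?Gs = G xs # xs" if "length xs = n" for xs :: "nat list"
    using that by (auto simp: arg_def intro: nth_equalityI)
  ultimately show ?thesis
    by (elim total_rec_cong) simp
qed

lemma total_rec_add:
  assumes "total_rec n F" and "total_rec n G"
  shows "total_rec n (\<lambda>xs. F xs + G xs)"
proof -
  have "total_rec (Suc (Suc 0)) (\<lambda>ys. arg 0 ys + arg 1 ys)"
    by (rule total_rec_prim_rec[where G = "arg 0" and H = "\<lambda>zs. Suc (arg 0 zs)"])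
      (auto intro!: total_rec_proj total_rec_Suc)
  then show ?thesis using assms by (rule total_rec_compose2)
qed

lemma total_rec_mult:
  assumes "total_rec n F" and "total_rec n G"
  shows "total_rec n (\<lambda>xs. F xs * G xs)"
proof -
  have "total_rec (Suc (Suc 0)) (\<lambda>ys. arg 0 ys * arg 1 ys)"
    by (rule total_rec_prim_rec[where G = "\<lambda>xs. 0" and H = "\<lambda>zs. arg 0 zs + arg 2 zs"])
      (auto intro!: total_rec_proj total_rec_add total_rec_const)
  then show ?thesis using assms by (rule total_rec_compose2)
qed

lemma total_rec_diff1:
  assumes "total_rec n F"
  shows "total_rec n (\<lambda>xs. F xs - 1)"
proof -
  have "total_rec (Suc 0) (\<lambda>ys. arg 0 ys - 1)"
    by (rule total_rec_prim_rec[where G = "\<lambda>xs. 0" and H = "arg 1"])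
      (auto intro!: total_rec_proj total_rec_const)
  then show ?thesis using assms by (rule total_rec_compose1)
qed

lemma total_rec_diff:
  assumes "total_rec n F" and "total_rec n G"
  shows "total_rec n (\<lambda>xs. F xs - G xs)"
proof -
  have pred: "total_rec (Suc (Suc (Suc 0))) (\<lambda>zs. arg 0 zs - 1)"
    by (intro total_rec_diff1 total_rec_proj) simp
  have "total_rec (Suc (Suc 0)) (\<lambda>ys. arg 1 ys - arg 0 ys)"
    by (rule total_rec_prim_rec[where G = "arg 0" and H = "\<lambda>zs. arg 0 zs - 1"])
      (use pred in \<open>auto intro!: total_rec_proj\<close>)
  then have "total_rec (Suc (Suc 0)) (\<lambda>ys. arg 0 ys - arg 1 ys)"
    by (rule total_rec_compose2[where F = "\<lambda>a b. b - a"]) (auto intro!: total_rec_proj)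
  then show ?thesis using assms by (rule total_rec_compose2)
qed

lemma total_rec_power2:
  assumes "total_rec n F"
  shows "total_rec n (\<lambda>xs. 2 ^ F xs)"
proof -
  have "total_rec (Suc 0) (\<lambda>ys. 2 ^ arg 0 ys)"
    by (rule total_rec_prim_rec[where G = "\<lambda>xs. 1" and H = "\<lambda>zs. arg 0 zs + arg 0 zs"])
      (auto intro!: total_rec_proj total_rec_add total_rec_const)
  then show ?thesis using assms by (rule total_rec_compose1)
qed

lemma total_rec_pred_eq:
  "total_rec n F \<Longrightarrow> total_rec n G \<Longrightarrow> total_rec_pred n (\<lambda>xs. F xs = G xs)"
  unfolding total_rec_pred_def
  by (rule total_rec_cong[where F = "\<lambda>xs. 1 - ((F xs - G xs) + (G xs - F xs))"])
    (auto intro!: total_rec_diff total_rec_add total_rec_const)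

lemma total_rec_pred_less:
  "total_rec n F \<Longrightarrow> total_rec n G \<Longrightarrow> total_rec_pred n (\<lambda>xs. F xs < G xs)"
  unfolding total_rec_pred_def
  by (rule total_rec_cong[where F = "\<lambda>xs. 1 - (1 - (G xs - F xs))"])
    (auto intro!: total_rec_diff total_rec_const)

lemma total_rec_pred_le:
  "total_rec n F \<Longrightarrow> total_rec n G \<Longrightarrow> total_rec_pred n (\<lambda>xs. F xs \<le> G xs)"
  unfolding total_rec_pred_def
  by (rule total_rec_cong[where F = "\<lambda>xs. 1 - (F xs - G xs)"])
    (auto intro!: total_rec_diff total_rec_const)

lemma total_rec_pred_conj:
  "total_rec_pred n P \<Longrightarrow> total_rec_pred n Q \<Longrightarrow> total_rec_pred n (\<lambda>xs. P xs \<and> Q xs)"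
  unfolding total_rec_pred_def
  by (rule total_rec_cong[where F = "\<lambda>xs. (if P xs then 1 else 0) * (if Q xs then 1 else 0)"])
    (auto intro!: total_rec_mult)

lemma total_rec_pred_not: "total_rec_pred n P \<Longrightarrow> total_rec_pred n (\<lambda>xs. \<not> P xs)"
  unfolding total_rec_pred_def
  by (rule total_rec_cong[where F = "\<lambda>xs. 1 - (if P xs then 1 else 0)"])
    (auto intro!: total_rec_diff total_rec_const)

lemma total_rec_pred_disj:
  "total_rec_pred n P \<Longrightarrow> total_rec_pred n Q \<Longrightarrow> total_rec_pred n (\<lambda>xs. P xs \<or> Q xs)"
  using total_rec_pred_not[of n "\<lambda>xs. \<not> P xs \<and> \<not> Q xs"] by (simp add: total_rec_pred_conj total_rec_pred_not)

lemma total_rec_pred_imp: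
  "total_rec_pred n P \<Longrightarrow> total_rec_pred n Q \<Longrightarrow> total_rec_pred n (\<lambda>xs. P xs \<longrightarrow> Q xs)"
  using total_rec_pred_disj[of n "\<lambda>xs. \<not> P xs" Q] by (simp add: total_rec_pred_not)

lemma total_rec_if:
  "total_rec_pred n P \<Longrightarrow> total_rec n F \<Longrightarrow> total_rec n G \<Longrightarrow> total_rec n (\<lambda>xs. if P xs then F xs else G xs)"
  unfolding total_rec_pred_def
  by (rule total_rec_cong[where F = "\<lambda>xs. (if P xs then 1 else 0) * F xs + (1 - (if P xs then 1 else 0)) * G xs"])
    (auto intro!: total_rec_diff total_rec_const total_rec_add total_rec_mult)

lemma total_rec_pred_bex_arg0:
  assumes "total_rec_pred (Suc n) (\<lambda>ys. P (arg 0 ys) (tl ys))"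
  shows "total_rec_pred (Suc n) (\<lambda>ys. \<exists>j<arg 0 ys. P j (tl ys))"
  unfolding total_rec_pred_def
proof (rule total_rec_prim_rec[where G = "\<lambda>xs. 0"
      and H = "\<lambda>zs. if arg 0 zs = 1 \<or> P (arg 1 zs) (tl (tl zs)) then 1 else 0"])
  have "total_rec_pred (Suc (Suc n)) (\<lambda>zs. P (arg 1 zs) (tl (tl zs)))"
    using total_rec_drop_arg[OF assms[unfolded total_rec_pred_def]] by (simp add: total_rec_pred_def)
  then show "total_rec (Suc (Suc n)) (\<lambda>zs. if arg 0 zs = 1 \<or> P (arg 1 zs) (tl (tl zs)) then 1 else 0)"
    unfolding total_rec_pred_def[symmetric]
    by (auto intro!: total_rec_pred_disj total_rec_pred_eq total_rec_proj total_rec_const)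
qed (auto simp: less_Suc_eq intro: total_rec_const)

lemma total_rec_pred_bex:
  assumes "total_rec_pred (Suc n) (\<lambda>ys. P (arg 0 ys) (tl ys))" and "total_rec n B"
  shows "total_rec_pred n (\<lambda>xs. \<exists>j<B xs. P j xs)"
  using total_rec_Cons_arg[OF total_rec_pred_bex_arg0[OF assms(1), unfolded total_rec_pred_def] assms(2)]
  by (simp add: total_rec_pred_def)

lemma total_rec_pred_ball:
  assumes "total_rec_pred (Suc n) (\<lambda>ys. P (arg 0 ys) (tl ys))" and "total_rec n B"
  shows "total_rec_pred n (\<lambda>xs. \<forall>j<B xs. P j xs)"
  using total_rec_pred_not[OF total_rec_pred_bex[OF total_rec_pred_not[OF assms(1)] assms(2)]]
  by simp

lemma total_rec_Least:
  assumes "total_rec_pred (Suc n) (\<lambda>ys. P (arg 0 ys) (tl ys))"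
    and "\<And>xs. length xs = n \<Longrightarrow> \<exists>m. P m xs"
  shows "total_rec n (\<lambda>xs. LEAST m. P m xs)"
proof -
  have "total_rec (Suc n) (\<lambda>ys. if \<not> P (arg 0 ys) (tl ys) then 1 else 0)"
    using total_rec_pred_not[OF assms(1)] by (simp only: total_rec_pred_def)
  then have "total_rec n (\<lambda>xs. LEAST m.
      (\<lambda>ys. if \<not> P (arg 0 ys) (tl ys) then 1 else 0 :: nat) (m # xs) = 0)"
    by (rule total_rec_minimize) (simp add: assms(2))
  moreover have "((if \<not> P m xs then 1 else 0 :: nat) = 0) = P m xs" for m xs
    by simp
  ultimately show ?thesis
    by simp
qed

lemmas total_rec_intros =
  total_rec_const total_rec_proj total_rec_Suc total_rec_add total_rec_mult total_rec_diff1
  total_rec_diff total_rec_power2 total_rec_if total_rec_Least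
  total_rec_pred_eq total_rec_pred_less total_rec_pred_le total_rec_pred_conj total_rec_pred_disj
  total_rec_pred_not total_rec_pred_imp total_rec_pred_bex total_rec_pred_ball

lemma eval_Mu_Least:
  assumes "total_rec_pred (Suc n) (\<lambda>ys. R (arg 0 ys) (tl ys))"
  shows "\<exists>f. \<forall>xs y. length xs = n \<longrightarrow> (eval f xs y \<longleftrightarrow> (\<exists>t. R t xs) \<and> y = (LEAST t. R t xs))"
proof -
  obtain f where f: "\<And>t xs. length xs = n \<Longrightarrow> eval f (t # xs) (if \<not> R t xs then 1 else 0)"
    using total_rec_pred_not[OF assms] unfolding total_rec_pred_def total_rec_def
    by (metis arg_Cons_0 length_Cons list.sel(3))
  have "eval (Mu f) xs y \<longleftrightarrow> (\<exists>t. R t xs) \<and> y = (LEAST t. R t xs)" if len: "length xs = n" for xs y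
  proof
    assume "eval (Mu f) xs y"
    then have zero: "eval f (y # xs) 0" and pos: "\<forall>m<y. \<exists>w>0. eval f (m # xs) w"
      by (blast elim: eval_MuE)+
    have "R y xs"
      using eval_deterministic[OF f[OF len] zero] by (simp split: if_splits)
    moreover have "\<not> R m xs" if "m < y" for m
    proof -
      obtain w where "w > 0" and w: "eval f (m # xs) w"
        using pos \<open>m < y\<close> by blast
      then show ?thesis
        using eval_deterministic[OF f[OF len] w] by (simp split: if_splits)
    qed
    ultimately show "(\<exists>t. R t xs) \<and> y = (LEAST t. R t xs)"
      by (metis Least_equality not_less)
  next
    assume "(\<exists>t. R t xs) \<and> y = (LEAST t. R t xs)"
    then have "R y xs" and least: "\<forall>m<y. \<not> R m xs"
      by (auto intro: LeastI_ex dest: not_less_Least)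
    show "eval (Mu f) xs y"
    proof (rule eval.mu)
      show "eval f (y # xs) 0"
        using f[OF len, of y] \<open>R y xs\<close> by simp
      show "\<forall>m<y. \<exists>w>0. eval f (m # xs) w"
      proof (intro allI impI exI conjI)
        fix m
        assume "m < y"
        then show "eval f (m # xs) 1"
          using f[OF len, of m] least by simp
      qed simp
    qed
  qed
  then show ?thesis
    by blast
qed

section \<open>Pairing and coded lists\<close>

definition npair :: "nat \<Rightarrow> nat \<Rightarrow> nat" where
  "npair a b = (a + b) * (a + b) + a"

definition isqrt :: "nat \<Rightarrow> nat" where
  "isqrt n = (LEAST s. n < Suc s * Suc s)"

definition nfst :: "nat \<Rightarrow> nat" where
  "nfst n = n - isqrt n * isqrt n"

definition nsnd :: "nat \<Rightarrow> nat" where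
  "nsnd n = isqrt n - nfst n"

\<comment> \<open>\<open>(a + b)\<^sup>2 \<le> npair a b < (a + b + 1)\<^sup>2\<close>\<close>
lemma isqrt_npair: "isqrt (npair a b) = a + b"
  unfolding isqrt_def npair_def
proof (rule Least_equality)
  fix s
  assume "(a + b) * (a + b) + a < Suc s * Suc s"
  then show "a + b \<le> s"
    by (metis Suc_le_eq add_lessD1 mult_le_mono not_less)
qed simp

lemma nfst_npair [simp]: "nfst (npair a b) = a"
  by (simp add: nfst_def isqrt_npair) (simp add: npair_def)

lemma nsnd_npair [simp]: "nsnd (npair a b) = b"
  by (simp add: nsnd_def isqrt_npair)

lemma isqrt_le: "isqrt n \<le> n"
  unfolding isqrt_def by (rule Least_le) simp

lemma nsnd_le: "nsnd n \<le> n"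
  using isqrt_le[of n] by (simp add: nsnd_def)

lemma total_rec_isqrt:
  assumes "total_rec n F"
  shows "total_rec n (\<lambda>xs. isqrt (F xs))"
proof -
  have "total_rec (Suc 0) (\<lambda>ys. LEAST s. arg 0 ys < Suc s * Suc s)"
  proof (rule total_rec_Least)
    show "\<exists>s. arg 0 ys < Suc s * Suc s" for ys
      by (rule exI[of _ "arg 0 ys"]) simp
  qed (auto intro!: total_rec_intros)
  then have "total_rec (Suc 0) (\<lambda>ys. isqrt (arg 0 ys))"
    by (simp add: isqrt_def)
  then show ?thesis using assms by (rule total_rec_compose1)
qed

lemma total_rec_nfst: "total_rec n F \<Longrightarrow> total_rec n (\<lambda>xs. nfst (F xs))"
  unfolding nfst_def by (intro total_rec_diff total_rec_mult total_rec_isqrt)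

lemma total_rec_nsnd: "total_rec n F \<Longrightarrow> total_rec n (\<lambda>xs. nsnd (F xs))"
  unfolding nsnd_def by (intro total_rec_diff total_rec_nfst total_rec_isqrt)

lemma total_rec_npair: "total_rec n F \<Longrightarrow> total_rec n G \<Longrightarrow> total_rec n (\<lambda>xs. npair (F xs) (G xs))"
  unfolding npair_def by (intro total_rec_add total_rec_mult)

definition ncons :: "nat \<Rightarrow> nat \<Rightarrow> nat" where
  "ncons x l = Suc (npair x l)"

definition nhd :: "nat \<Rightarrow> nat" where
  "nhd l = nfst (l - 1)"

definition ntl :: "nat \<Rightarrow> nat" where
  "ntl l = nsnd (l - 1)"

lemma nhd_ncons [simp]: "nhd (ncons x l) = x"
  by (simp add: nhd_def ncons_def)

lemma ntl_ncons [simp]: "ntl (ncons x l) = l"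
  by (simp add: ntl_def ncons_def)

lemma ncons_neq_0 [simp]: "ncons x l \<noteq> 0"
  by (simp add: ncons_def)

lemma ntl_less: "l > 0 \<Longrightarrow> ntl l < l"
  using nsnd_le[of "l - 1"] by (simp add: ntl_def)

lemma ntl_0 [simp]: "ntl 0 = 0"
  using nsnd_le[of 0] by (simp add: ntl_def)

lemma total_rec_ncons: "total_rec n F \<Longrightarrow> total_rec n G \<Longrightarrow> total_rec n (\<lambda>xs. ncons (F xs) (G xs))"
  unfolding ncons_def by (intro total_rec_Suc total_rec_npair)

lemma total_rec_nhd: "total_rec n F \<Longrightarrow> total_rec n (\<lambda>xs. nhd (F xs))"
  unfolding nhd_def by (intro total_rec_nfst total_rec_diff1)

lemma total_rec_ntl: "total_rec n F \<Longrightarrow> total_rec n (\<lambda>xs. ntl (F xs))"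
  unfolding ntl_def by (intro total_rec_nsnd total_rec_diff1)

primrec list_code :: "nat list \<Rightarrow> nat" where
  "list_code [] = 0"
| "list_code (x # xs) = ncons x (list_code xs)"

function list_decode :: "nat \<Rightarrow> nat list" where
  "list_decode l = (if l = 0 then [] else nhd l # list_decode (ntl l))"
  by auto
termination
  by (relation "measure id") (auto simp: ntl_less)

declare list_decode.simps [simp del]

lemma list_decode_0 [simp]: "list_decode 0 = []"
  by (simp add: list_decode.simps)

lemma list_decode_pos: "l \<noteq> 0 \<Longrightarrow> list_decode l = nhd l # list_decode (ntl l)"
  by (simp add: list_decode.simps)

lemma list_decode_ncons [simp]: "list_decode (ncons x l) = x # list_decode l"
  by (simp add: list_decode_pos)

lemma list_decode_list_code [simp]: "list_decode (list_code xs) = xs"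
  by (induction xs) auto

definition nlength :: "nat \<Rightarrow> nat" where
  "nlength l = length (list_decode l)"

definition nnth :: "nat \<Rightarrow> nat \<Rightarrow> nat" where
  "nnth l i = nhd ((ntl ^^ i) l)"

lemma nnth_eq_nth: "i < nlength l \<Longrightarrow> nnth l i = list_decode l ! i"
proof (induction i arbitrary: l)
  case 0
  then show ?case by (cases "l = 0") (auto simp: nnth_def nlength_def list_decode_pos)
next
  case (Suc i)
  then have "l \<noteq> 0" by (cases "l = 0") (auto simp: nlength_def)
  then show ?case
    using Suc by (auto simp: nnth_def nlength_def list_decode_pos funpow_swap1)
qed

lemma ntl_funpow_eq_0_iff: "(ntl ^^ i) l = 0 \<longleftrightarrow> nlength l \<le> i"
proof (induction i arbitrary: l)
  case 0
  then show ?case by (cases "l = 0") (auto simp: nlength_def list_decode_pos)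
next
  case (Suc i)
  have "(ntl ^^ i) 0 = 0" for i
    by (induction i) auto
  then show ?case
    using Suc by (cases "l = 0") (auto simp: nlength_def list_decode_pos funpow_swap1)
qed

lemma total_rec_ntl_funpow:
  assumes "total_rec n I" and "total_rec n L"
  shows "total_rec n (\<lambda>xs. (ntl ^^ I xs) (L xs))"
proof -
  have "total_rec (Suc (Suc 0)) (\<lambda>ys. (ntl ^^ arg 0 ys) (arg 1 ys))"
    by (rule total_rec_prim_rec[where G = "arg 0" and H = "\<lambda>zs. ntl (arg 0 zs)"])
      (auto intro!: total_rec_proj total_rec_ntl)
  then show ?thesis using assms by (rule total_rec_compose2)
qed

lemma total_rec_nnth: "total_rec n L \<Longrightarrow> total_rec n I \<Longrightarrow> total_rec n (\<lambda>xs. nnth (L xs) (I xs))"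
  unfolding nnth_def by (intro total_rec_nhd total_rec_ntl_funpow)

lemma total_rec_nlength:
  assumes "total_rec n L"
  shows "total_rec n (\<lambda>xs. nlength (L xs))"
proof -
  have "total_rec (Suc 0) (\<lambda>ys. LEAST i. (ntl ^^ i) (arg 0 ys) = 0)"
  proof (rule total_rec_Least)
    show "\<exists>i. (ntl ^^ i) (arg 0 ys) = 0" for ys
      by (auto simp: ntl_funpow_eq_0_iff)
  qed (auto intro!: total_rec_intros total_rec_ntl_funpow)
  moreover have "(LEAST i. (ntl ^^ i) l = 0) = nlength l" for l
    unfolding ntl_funpow_eq_0_iff by (rule Least_equality) auto
  ultimately have "total_rec (Suc 0) (\<lambda>ys. nlength (arg 0 ys))"
    by simp
  then show ?thesis using assms by (rule total_rec_compose1)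
qed

lemma nlength_list_code [simp]: "nlength (list_code xs) = length xs"
  by (simp add: nlength_def)

lemma nnth_list_code [simp]: "i < length xs \<Longrightarrow> nnth (list_code xs) i = xs ! i"
  by (simp add: nnth_eq_nth)

lemmas total_rec_code_intros = total_rec_intros
  total_rec_isqrt total_rec_nfst total_rec_nsnd total_rec_npair
  total_rec_ncons total_rec_nhd total_rec_ntl total_rec_nnth total_rec_nlength

section \<open>Computation traces\<close>

fun rf_code :: "rf \<Rightarrow> nat" where
  "rf_code Zero = npair 0 0"
| "rf_code Succ = npair 1 0"
| "rf_code (Proj i) = npair 2 i"
| "rf_code (Comp f gs) = npair 3 (npair (rf_code f) (list_code (map rf_code gs)))"
| "rf_code (Prim f g) = npair 4 (npair (rf_code f) (rf_code g))"
| "rf_code (Mu f) = npair 5 (rf_code f)"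

text \<open>A node \<open>(c, a, v, w)\<close> of a trace claims \<open>eval f (list_decode a) v\<close> for the program \<open>f\<close>
  with code \<open>c\<close>; \<open>H\<close> and \<open>HP\<close> are the claims made earlier in the trace (\<open>HP c a\<close>: with some
  positive value). The auxiliary entry \<open>w\<close> holds the coded list of intermediate values for
  \<open>Comp\<close> and the value of the recursive call for \<open>Prim\<close>.\<close>

definition justified ::
    "(nat \<Rightarrow> nat \<Rightarrow> nat \<Rightarrow> bool) \<Rightarrow> (nat \<Rightarrow> nat \<Rightarrow> bool) \<Rightarrow> nat \<Rightarrow> nat \<Rightarrow> nat \<Rightarrow> nat \<Rightarrow> bool" where
  "justified H HP c a v w \<longleftrightarrow>
    (nfst c = 0 \<and> v = 0) \<or>
    (nfst c = 1 \<and> a \<noteq> 0 \<and> v = Suc (nhd a)) \<or>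
    (nfst c = 2 \<and> nsnd c < nlength a \<and> v = nnth a (nsnd c)) \<or>
    (nfst c = 3 \<and> nlength w = nlength (nsnd (nsnd c))
      \<and> (\<forall>j<nlength w. H (nnth (nsnd (nsnd c)) j) a (nnth w j)) \<and> H (nfst (nsnd c)) w v) \<or>
    (nfst c = 4 \<and> a \<noteq> 0 \<and> nhd a = 0 \<and> H (nfst (nsnd c)) (ntl a) v) \<or>
    (nfst c = 4 \<and> a \<noteq> 0 \<and> nhd a \<noteq> 0 \<and> H c (ncons (nhd a - 1) (ntl a)) w
      \<and> H (nsnd (nsnd c)) (ncons w (ncons (nhd a - 1) (ntl a))) v) \<or>
    (nfst c = 5 \<and> H (nsnd c) (ncons v a) 0 \<and> (\<forall>m<v. HP (nsnd c) (ncons m a)))"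

lemma justified_mono:
  assumes "justified H HP c a v w"
    and "\<And>c a v. H c a v \<Longrightarrow> H' c a v" and "\<And>c a. HP c a \<Longrightarrow> HP' c a"
  shows "justified H' HP' c a v w"
  using assms(1) unfolding justified_def
  by (elim disjE conjE) (simp_all add: assms(2,3))

lemma justified_sound:
  assumes "justified H HP (rf_code f) a v w"
    and H: "\<And>g a v. H (rf_code g) a v \<Longrightarrow> eval g (list_decode a) v"
    and HP: "\<And>g a. HP (rf_code g) a \<Longrightarrow> \<exists>u>0. eval g (list_decode a) u"
  shows "eval f (list_decode a) v"
proof (cases f)
  case Zero
  with assms(1) show ?thesis
    by (simp add: justified_def eval.zero)
next
  case Succ
  with assms(1) show ?thesis
    by (simp add: justified_def list_decode_pos eval.succ)
next
  case (Proj i)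
  with assms(1) show ?thesis
    by (simp add: justified_def nlength_def nnth_eq_nth eval.proj)
next
  case (Comp g gs)
  with assms(1) have len: "nlength w = length gs"
    and gs: "\<forall>j<length gs. H (rf_code (gs ! j)) a (nnth w j)" and g: "H (rf_code g) w v"
    by (auto simp: justified_def)
  have "list_all2 (\<lambda>g v. eval g (list_decode a) v) gs (list_decode w)"
    using len gs H by (auto simp: list_all2_conv_all_nth nlength_def nnth_eq_nth)
  with H[OF g] show ?thesis
    using Comp by (simp add: eval.comp)
next
  case (Prim g h)
  with assms(1) consider
      "a \<noteq> 0" "nhd a = 0" "H (rf_code g) (ntl a) v"
    | w where "a \<noteq> 0" "nhd a \<noteq> 0" "H (rf_code f) (ncons (nhd a - 1) (ntl a)) w"
        "H (rf_code h) (ncons w (ncons (nhd a - 1) (ntl a))) v"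
    by (auto simp: justified_def)
  then show ?thesis
  proof cases
    case 1
    then show ?thesis
      using H Prim by (auto simp: list_decode_pos intro: eval.prim0)
  next
    case 2
    then obtain n where n: "nhd a = Suc n"
      using not0_implies_Suc by blast
    have "eval (Prim g h) (Suc n # list_decode (ntl a)) v"
      using H[OF 2(3)] H[OF 2(4)] Prim n by (auto intro: eval.primS)
    then show ?thesis
      using 2 n Prim by (simp add: list_decode_pos)
  qed
next
  case (Mu g)
  with assms(1) have "H (rf_code g) (ncons v a) 0" and "\<forall>m<v. HP (rf_code g) (ncons m a)"
    by (simp_all add: justified_def)
  then have "eval g (v # list_decode a) 0" and "\<forall>m<v. \<exists>u>0. eval g (m # list_decode a) u"
    using H HP by force+
  then show ?thesis
    using Mu by (simp add: eval.mu)
qed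

definition node :: "nat \<Rightarrow> nat \<Rightarrow> nat \<Rightarrow> nat \<Rightarrow> nat" where
  "node c a v w = npair c (npair a (npair v w))"

definition node_prog :: "nat \<Rightarrow> nat" where "node_prog nd = nfst nd"
definition node_args :: "nat \<Rightarrow> nat" where "node_args nd = nfst (nsnd nd)"
definition node_val :: "nat \<Rightarrow> nat" where "node_val nd = nfst (nsnd (nsnd nd))"
definition node_aux :: "nat \<Rightarrow> nat" where "node_aux nd = nsnd (nsnd (nsnd nd))"

lemma node_simps [simp]:
  "node_prog (node c a v w) = c" "node_args (node c a v w) = a"
  "node_val (node c a v w) = v" "node_aux (node c a v w) = w"
  by (simp_all add: node_def node_prog_def node_args_def node_val_def node_aux_def)

definition derives :: "nat set \<Rightarrow> nat \<Rightarrow> nat \<Rightarrow> nat \<Rightarrow> bool" where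
  "derives S c a v \<longleftrightarrow> (\<exists>nd\<in>S. node_prog nd = c \<and> node_args nd = a \<and> node_val nd = v)"

definition derives_pos :: "nat set \<Rightarrow> nat \<Rightarrow> nat \<Rightarrow> bool" where
  "derives_pos S c a \<longleftrightarrow> (\<exists>nd\<in>S. node_prog nd = c \<and> node_args nd = a \<and> node_val nd > 0)"

definition node_ok :: "nat set \<Rightarrow> nat \<Rightarrow> bool" where
  "node_ok S nd \<longleftrightarrow>
    justified (derives S) (derives_pos S) (node_prog nd) (node_args nd) (node_val nd) (node_aux nd)"

definition valid_trace :: "nat list \<Rightarrow> bool" where
  "valid_trace Ns \<longleftrightarrow> (\<forall>i<length Ns. node_ok (set (take i Ns)) (Ns ! i))"

lemma valid_trace_Nil [simp]: "valid_trace []"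
  by (simp add: valid_trace_def)

lemma valid_trace_snoc_iff [simp]:
  "valid_trace (Ns @ [nd]) \<longleftrightarrow> valid_trace Ns \<and> node_ok (set Ns) nd"
  by (auto simp: valid_trace_def nth_append less_Suc_eq)

lemma node_ok_mono: "node_ok S nd \<Longrightarrow> S \<subseteq> S' \<Longrightarrow> node_ok S' nd"
  unfolding node_ok_def by (erule justified_mono) (auto simp: derives_def derives_pos_def)

lemma valid_trace_append: "valid_trace Ns \<Longrightarrow> valid_trace Ms \<Longrightarrow> valid_trace (Ns @ Ms)"
proof (induction Ms rule: rev_induct)
  case (snoc nd Ms)
  then show ?case
    using node_ok_mono[of "set Ms" nd "set (Ns @ Ms)"] by (simp flip: append_assoc)
qed simp

lemma derives_pos_iff: "derives_pos S c a \<longleftrightarrow> (\<exists>v>0. derives S c a v)"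
  by (auto simp: derives_pos_def derives_def)

lemma valid_trace_sound:
  "valid_trace Ns \<Longrightarrow> derives (set Ns) (rf_code f) a v \<Longrightarrow> eval f (list_decode a) v"
proof (induction Ns arbitrary: f a v rule: rev_induct)
  case (snoc nd Ns)
  then have "valid_trace Ns" and nd: "node_ok (set Ns) nd"
    by simp_all
  note IH = snoc.IH[OF this(1)]
  show ?case
  proof (cases "derives (set Ns) (rf_code f) a v")
    case False
    with snoc.prems(2) have "node_prog nd = rf_code f" "node_args nd = a" "node_val nd = v"
      by (auto simp: derives_def)
    with nd have "justified (derives (set Ns)) (derives_pos (set Ns)) (rf_code f) a v (node_aux nd)"
      by (simp add: node_ok_def)
    then show ?thesis
      by (rule justified_sound) (use IH in \<open>auto simp: derives_pos_iff\<close>)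
  qed (rule IH)
qed (simp add: derives_def)

lemma valid_trace_extend:
  assumes "valid_trace Ns" and "justified (derives (set Ns)) (derives_pos (set Ns)) c a v w"
  shows "\<exists>Ns'. valid_trace Ns' \<and> derives (set Ns') c a v"
proof (intro exI conjI)
  show "valid_trace (Ns @ [node c a v w])"
    using assms by (simp add: node_ok_def)
  show "derives (set (Ns @ [node c a v w])) c a v"
    by (auto simp: derives_def)
qed

lemma valid_trace_merge:
  assumes "\<forall>i<(n::nat). \<exists>Ns. valid_trace Ns \<and> Q i (set Ns)"
    and "\<And>i S S'. Q i S \<Longrightarrow> S \<subseteq> S' \<Longrightarrow> Q i S'"
  shows "\<exists>Ns. valid_trace Ns \<and> (\<forall>i<n. Q i (set Ns))"
  using assms(1)
proof (induction n)
  case (Suc n)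
  obtain Ns where "valid_trace Ns" "\<forall>i<n. Q i (set Ns)"
    using Suc by auto
  moreover obtain Ms where "valid_trace Ms" "Q n (set Ms)"
    using Suc.prems by blast
  ultimately show ?case
    using assms(2) by (intro exI[of _ "Ns @ Ms"]) (auto simp: valid_trace_append less_Suc_eq)
qed (auto intro: valid_trace_Nil)

lemma eval_valid_trace:
  "eval f xs v \<Longrightarrow> \<exists>Ns. valid_trace Ns \<and> derives (set Ns) (rf_code f) (list_code xs) v"
proof (induction rule: eval.induct)
  case (zero xs)
  show ?case
    by (rule valid_trace_extend[OF valid_trace_Nil, where w = 0]) (simp add: justified_def)
next
  case (succ x xs)
  show ?case
    by (rule valid_trace_extend[OF valid_trace_Nil, where w = 0]) (simp add: justified_def)
next
  case (proj i xs)
  then show ?case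
    by (intro valid_trace_extend[OF valid_trace_Nil, where w = 0]) (simp add: justified_def)
next
  case (comp xs gs vs f v)
  have len: "length gs = length vs"
    using comp.IH(1) by (rule list_all2_lengthD)
  have "\<exists>Ns. valid_trace Ns \<and> (\<forall>j<length gs. derives (set Ns) (rf_code (gs ! j)) (list_code xs) (vs ! j))"
    using comp.IH(1)
    by (intro valid_trace_merge) (auto simp: list_all2_conv_all_nth derives_def)
  then obtain Ns where "valid_trace Ns"
    and "\<forall>j<length gs. derives (set Ns) (rf_code (gs ! j)) (list_code xs) (vs ! j)"
    by blast
  moreover obtain Ms where "valid_trace Ms" and "derives (set Ms) (rf_code f) (list_code vs) v"
    using comp.IH(2) by blast
  ultimately show ?case
    using len by (intro valid_trace_extend[where Ns = "Ns @ Ms" and w = "list_code vs"])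
      (auto simp: valid_trace_append justified_def derives_def)
next
  case (prim0 f xs v g)
  then obtain Ns where "valid_trace Ns" and "derives (set Ns) (rf_code f) (list_code xs) v"
    by blast
  then show ?case
    by (intro valid_trace_extend[where w = 0]) (simp_all add: justified_def)
next
  case (primS f g n xs r v)
  obtain Ns where "valid_trace Ns" and "derives (set Ns) (rf_code (Prim f g)) (list_code (n # xs)) r"
    using primS.IH(1) by blast
  moreover obtain Ms where "valid_trace Ms" and "derives (set Ms) (rf_code g) (list_code (r # n # xs)) v"
    using primS.IH(2) by blast
  ultimately show ?case
    by (intro valid_trace_extend[where Ns = "Ns @ Ms" and w = r])
      (auto simp: valid_trace_append justified_def derives_def)
next
  case (mu f n xs)
  obtain Ns where "valid_trace Ns" and "derives (set Ns) (rf_code f) (list_code (n # xs)) 0"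
    using mu.IH(1) by blast
  moreover have "\<exists>Ms. valid_trace Ms \<and> (\<forall>m<n. derives_pos (set Ms) (rf_code f) (ncons m (list_code xs)))"
  proof (rule valid_trace_merge)
    show "\<forall>m<n. \<exists>Ms. valid_trace Ms \<and> derives_pos (set Ms) (rf_code f) (ncons m (list_code xs))"
      using mu.IH(2) by (fastforce simp: derives_pos_iff)
  qed (auto simp: derives_pos_def)
  then obtain Ms where "valid_trace Ms" and "\<forall>m<n. derives_pos (set Ms) (rf_code f) (ncons m (list_code xs))"
    by blast
  ultimately show ?case
    by (intro valid_trace_extend[where Ns = "Ns @ Ms" and w = 0])
      (auto simp: valid_trace_append justified_def derives_def derives_pos_def)
qed

definition trace_derives :: "nat \<Rightarrow> nat \<Rightarrow> nat \<Rightarrow> nat \<Rightarrow> nat \<Rightarrow> bool" where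
  "trace_derives L i c a v \<longleftrightarrow>
    (\<exists>j<i. node_prog (nnth L j) = c \<and> node_args (nnth L j) = a \<and> node_val (nnth L j) = v)"

definition trace_derives_pos :: "nat \<Rightarrow> nat \<Rightarrow> nat \<Rightarrow> nat \<Rightarrow> bool" where
  "trace_derives_pos L i c a \<longleftrightarrow>
    (\<exists>j<i. node_prog (nnth L j) = c \<and> node_args (nnth L j) = a \<and> node_val (nnth L j) > 0)"

definition valid_trace_code :: "nat \<Rightarrow> bool" where
  "valid_trace_code L \<longleftrightarrow> (\<forall>i<nlength L. justified (trace_derives L i) (trace_derives_pos L i)
    (node_prog (nnth L i)) (node_args (nnth L i)) (node_val (nnth L i)) (node_aux (nnth L i)))"

lemma set_take_list_decode:
  "i \<le> nlength L \<Longrightarrow> set (take i (list_decode L)) = nnth L ` {..<i}"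
  by (auto simp: nth_image[symmetric] nlength_def nnth_eq_nth)

lemma trace_derives_eq:
  "i \<le> nlength L \<Longrightarrow> trace_derives L i = derives (set (take i (list_decode L)))"
  by (auto simp: fun_eq_iff set_take_list_decode trace_derives_def derives_def)

lemma trace_derives_pos_eq:
  "i \<le> nlength L \<Longrightarrow> trace_derives_pos L i = derives_pos (set (take i (list_decode L)))"
  by (auto simp: fun_eq_iff set_take_list_decode trace_derives_pos_def derives_pos_def)

lemma valid_trace_code_iff: "valid_trace_code L \<longleftrightarrow> valid_trace (list_decode L)"
  by (simp add: valid_trace_code_def valid_trace_def node_ok_def trace_derives_eq trace_derives_pos_eq
      nlength_def nnth_eq_nth)

lemma trace_derives_nlength_iff:
  "trace_derives L (nlength L) c a v \<longleftrightarrow> derives (set (list_decode L)) c a v"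
  by (simp add: trace_derives_eq nlength_def)

lemma trace_derives_list_code_iff:
  "trace_derives (list_code Ns) (length Ns) c a v \<longleftrightarrow> derives (set Ns) c a v"
  using trace_derives_nlength_iff[of "list_code Ns"] by simp

\<comment> \<open>lets \<open>intro\<close> see through the argument shifts produced by bounded quantifiers\<close>
lemma total_rec_arg_tl: "total_rec n (\<lambda>xs. arg (Suc i) (T xs)) \<Longrightarrow> total_rec n (\<lambda>xs. arg i (tl (T xs)))"
  by simp

lemma total_rec_pred_valid_trace_code:
  assumes "total_rec n L"
  shows "total_rec_pred n (\<lambda>xs. valid_trace_code (L xs))"
proof -
  have "total_rec_pred (Suc 0) (\<lambda>ys. valid_trace_code (arg 0 ys))"
    unfolding valid_trace_code_def justified_def trace_derives_def trace_derives_pos_def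
      node_prog_def node_args_def node_val_def node_aux_def
    by (intro total_rec_code_intros total_rec_arg_tl) simp_all
  then show ?thesis
    using assms unfolding total_rec_pred_def by (rule total_rec_compose1)
qed

section \<open>Binary strings and the universal function\<close>

function dec :: "nat \<Rightarrow> bstr" where
  "dec n = (if n = 0 then [] else if odd n then False # dec ((n - 1) div 2) else True # dec ((n - 2) div 2))"
  by auto
termination
  by (relation "measure id") auto

declare dec.simps [simp del]

lemma dec_enc [simp]: "dec (enc y) = y"
proof (induction y)
  case Nil
  show ?case
    by (subst dec.simps) simp
next
  case (Cons b y)
  then show ?case
    by (subst dec.simps) auto
qed

lemma enc_dec [simp]: "enc (dec n) = n"
proof (induction n rule: less_induct)
  case (less n)
  then show ?case
    by (subst dec.simps) (auto elim: oddE evenE)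
qed

lemma inj_enc: "inj enc"
  by (metis dec_enc injI)

lemma enc_append: "enc (xs @ ys) = enc xs + 2 ^ length xs * enc ys"
  by (induction xs) auto

lemma enc_replicate_True: "enc (replicate k True) = 2 ^ Suc k - 2"
proof (induction k)
  case (Suc k)
  have "(1::nat) \<le> 2 ^ k"
    by simp
  with Suc show ?case
    by (simp, arith)
qed simp

lemma replicate_True_False_inject:
  "replicate k True @ False # u = replicate k' True @ False # u' \<Longrightarrow> k = k' \<and> u = u'"
proof (induction k arbitrary: k')
  case 0
  then show ?case by (cases k') auto
next
  case (Suc k)
  then show ?case by (cases k') auto
qed

lemma computable2_Least:
  assumes "total_rec_pred (Suc (Suc (Suc 0))) (\<lambda>ys. R (arg 0 ys) (arg 1 ys) (arg 2 ys))"
    and "total_rec (Suc 0) (\<lambda>ys. g (arg 0 ys))"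
  shows "computable2 (\<lambda>p x. if \<exists>t. R t (enc p) (enc x)
    then Some (dec (g (LEAST t. R t (enc p) (enc x)))) else None)"
proof -
  have "total_rec_pred (Suc 2) (\<lambda>ys. R (arg 0 ys) (arg 0 (tl ys)) (arg 1 (tl ys)))"
    using assms(1) by (simp add: numeral_2_eq_2)
  then obtain f where "\<forall>xs y. length xs = 2 \<longrightarrow>
      (eval f xs y \<longleftrightarrow> (\<exists>t. R t (arg 0 xs) (arg 1 xs)) \<and> y = (LEAST t. R t (arg 0 xs) (arg 1 xs)))"
    using eval_Mu_Least[where R = "\<lambda>t xs. R t (arg 0 xs) (arg 1 xs)"] by blast
  then have f: "eval f [P, X] y \<longleftrightarrow> (\<exists>t. R t P X) \<and> y = (LEAST t. R t P X)" for P X y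
    by (auto dest: spec[of _ "[P, X]"])
  obtain h where h: "\<And>t. eval h [t] (g t)"
    using assms(2) unfolding total_rec_def by (metis arg_Cons_0 length_Cons list.size(3))
  have "eval (Comp h [f]) [P, X] y \<longleftrightarrow> (\<exists>t. R t P X) \<and> y = g (LEAST t. R t P X)" for P X y
  proof
    assume "eval (Comp h [f]) [P, X] y"
    then obtain t where t: "eval f [P, X] t" and "eval h [t] y"
      by (auto elim!: eval_CompE simp: list_all2_Cons1)
    then have "y = g t"
      using eval_deterministic h by blast
    with t show "(\<exists>t. R t P X) \<and> y = g (LEAST t. R t P X)"
      using f[of P X t] by auto
  next
    assume "(\<exists>t. R t P X) \<and> y = g (LEAST t. R t P X)"
    then have "eval f [P, X] (LEAST t. R t P X)" and "eval h [LEAST t. R t P X] y"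
      using f h by auto
    then show "eval (Comp h [f]) [P, X] y"
      by (intro eval.comp[where vs = "[LEAST t. R t P X]"]) simp_all
  qed
  then show ?thesis
    unfolding computable2_def
    by (intro exI[of _ "Comp h [f]"]) (auto simp: inj_eq[OF inj_enc] dest: arg_cong[where f = dec])
qed

definition prog_enc :: "nat \<Rightarrow> nat \<Rightarrow> nat \<Rightarrow> nat" where
  "prog_enc b k q = enc ((b \<noteq> 0) # replicate k True @ False # dec q)"

lemma prog_enc_eq:
  "prog_enc b k q = 2 * ((2 ^ Suc k - 2) + 2 ^ k * (2 * q + 1)) + (if b = 0 then 1 else 2)"
  unfolding prog_enc_def enc.simps enc_append enc_replicate_True length_replicate enc_dec
  by simp

definition wit_prog :: "nat \<Rightarrow> nat" where "wit_prog t = nfst t"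
definition wit_input :: "nat \<Rightarrow> nat" where "wit_input t = nfst (nsnd t)"
definition wit_trace :: "nat \<Rightarrow> nat" where "wit_trace t = nfst (nsnd (nsnd t))"
definition wit_flag :: "nat \<Rightarrow> nat" where "wit_flag t = nfst (nsnd (nsnd (nsnd t)))"
definition wit_val :: "nat \<Rightarrow> nat" where "wit_val t = nsnd (nsnd (nsnd (nsnd t)))"

definition certifies :: "nat \<Rightarrow> nat \<Rightarrow> nat \<Rightarrow> bool" where
  "certifies t P X \<longleftrightarrow>
    valid_trace_code (wit_trace t)
    \<and> trace_derives (wit_trace t) (nlength (wit_trace t)) (wit_prog t)
        (list_code [wit_input t, X]) (wit_val t)
    \<and> P = prog_enc (wit_flag t) (wit_prog t) (wit_input t)
    \<and> X \<noteq> (if wit_flag t = 0 then enc [] else enc [True])"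

definition universal :: "bstr \<Rightarrow> bstr \<Rightarrow> bstr option" where
  "universal p x = (if \<exists>t. certifies t (enc p) (enc x)
    then Some (dec (wit_val (LEAST t. certifies t (enc p) (enc x)))) else None)"

lemma computable2_universal: "computable2 universal"
  unfolding universal_def
proof (rule computable2_Least[where R = certifies and g = wit_val])
  show "total_rec_pred (Suc (Suc (Suc 0))) (\<lambda>ys. certifies (arg 0 ys) (arg 1 ys) (arg 2 ys))"
    unfolding certifies_def trace_derives_def list_code.simps prog_enc_eq
      wit_prog_def wit_input_def wit_trace_def wit_flag_def wit_val_def
      node_prog_def node_args_def node_val_def
    by (intro total_rec_code_intros total_rec_arg_tl total_rec_pred_valid_trace_code) simp_all
  show "total_rec (Suc 0) (\<lambda>ys. wit_val (arg 0 ys))"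
    unfolding wit_val_def by (intro total_rec_code_intros) simp
qed

lemma certifies_progD:
  assumes "certifies t (enc p) (enc x)"
  shows "p = (wit_flag t \<noteq> 0) # replicate (wit_prog t) True @ False # dec (wit_input t)"
    and "x \<noteq> (if wit_flag t = 0 then [] else [True])"
  using assms unfolding certifies_def prog_enc_def
  by (auto simp: inj_eq[OF inj_enc] simp del: enc.simps split: if_splits)

lemma certifies_sound:
  assumes "certifies t P X" and "wit_prog t = rf_code f"
  shows "eval f [wit_input t, X] (wit_val t)"
proof -
  have "valid_trace (list_decode (wit_trace t))"
    and "derives (set (list_decode (wit_trace t))) (rf_code f) (list_code [wit_input t, X]) (wit_val t)"
    using assms by (simp_all add: certifies_def valid_trace_code_iff trace_derives_nlength_iff)
  then show ?thesis
    using valid_trace_sound by fastforce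
qed

lemma universal_simulates:
  assumes "eval f [enc q, enc x] (enc y)"
  shows "universal ((x \<noteq> [True]) # replicate (rf_code f) True @ False # q) x = Some y"
    (is "universal ?p x = _")
proof -
  obtain Ns where Ns: "valid_trace Ns" "derives (set Ns) (rf_code f) (list_code [enc q, enc x]) (enc y)"
    using eval_valid_trace[OF assms] by blast
  let ?b = "if x \<noteq> [True] then 1 else 0"
  have "certifies (npair (rf_code f) (npair (enc q) (npair (list_code Ns) (npair ?b (enc y))))) (enc ?p) (enc x)"
    using Ns by (auto simp: inj_eq[OF inj_enc] certifies_def prog_enc_def
        wit_prog_def wit_input_def wit_trace_def wit_flag_def wit_val_def
        valid_trace_code_iff trace_derives_list_code_iff simp del: enc.simps)
  then have ex: "\<exists>t. certifies t (enc ?p) (enc x)" ..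
  define t where "t = (LEAST t. certifies t (enc ?p) (enc x))"
  have t: "certifies t (enc ?p) (enc x)"
    unfolding t_def using ex by (rule LeastI_ex)
  have "replicate (rf_code f) True @ False # q = replicate (wit_prog t) True @ False # dec (wit_input t)"
    using certifies_progD(1)[OF t] by simp
  then have "wit_prog t = rf_code f" and "wit_input t = enc q"
    by (auto dest: replicate_True_False_inject)
  then have "wit_val t = enc y"
    using certifies_sound[OF t] eval_deterministic assms by metis
  then show ?thesis
    using ex by (simp add: universal_def t_def)
qed

lemma E_universal_Nil_True: "E universal [] [True] = \<infinity>"
proof -
  have "\<not> (universal p [] = Some [True] \<and> universal p [True] = Some [])" for p
  proof
    assume "universal p [] = Some [True] \<and> universal p [True] = Some []"
    then obtain t t' where t: "certifies t (enc p) (enc [])" and t': "certifies t' (enc p) (enc [True])"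
      unfolding universal_def by (auto split: if_splits)
    have "wit_flag t \<noteq> 0" and "wit_flag t' = 0"
      using certifies_progD(2)[OF t] certifies_progD(2)[OF t'] by (auto split: if_splits)
    moreover have "(wit_flag t \<noteq> 0) = (wit_flag t' \<noteq> 0)"
      using certifies_progD(1)[OF t] certifies_progD(1)[OF t'] by simp
    ultimately show False
      by simp
  qed
  then have empty: "{p. universal p [] = Some [True] \<and> universal p [True] = Some []} = {}"
    by blast
  show ?thesis
    unfolding E_def empty by (simp add: top_enat_def)
qed

section \<open>Optimality of the conditional complexity\<close>

lemma KS_attained:
  assumes "V p x = Some y"
  obtains p' where "V p' x = Some y" and "KS V y x = enat (length p')"
proof -
  let ?A = "(\<lambda>p. enat (length p)) ` {p. V p x = Some y}"
  have nonempty: "?A \<noteq> {}"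
    using assms by blast
  have "KS V y x = Inf ?A"
    unfolding KS_def ..
  also have "\<dots> = (LEAST n. n \<in> ?A)"
    by (simp only: Inf_enat_def nonempty if_False)
  finally have "KS V y x = (LEAST n. n \<in> ?A)" .
  moreover have "(LEAST n. n \<in> ?A) \<in> ?A"
    using nonempty by (rule LeastI_ex[OF ex_in_conv[THEN iffD2]])
  ultimately show ?thesis
    using that by auto
qed

lemma KS_le_by_translation:
  assumes "\<And>p. V p x = Some y \<Longrightarrow> U (\<tau> p) x = Some y"
    and "\<And>p. length (\<tau> p) = length p + c"
  shows "KS U y x \<le> KS V y x + enat c"
proof (cases "\<exists>p. V p x = Some y")
  case True
  then obtain p0 where "V p0 x = Some y" ..
  then obtain p where p: "V p x = Some y" and KS_V: "KS V y x = enat (length p)"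
    by (rule KS_attained)
  have "KS U y x \<le> enat (length (\<tau> p))"
    unfolding KS_def using assms(1)[OF p] by (auto intro: INF_lower)
  then show ?thesis
    by (simp add: KS_V assms(2))
next
  case False
  then show ?thesis
    by (simp add: KS_def top_enat_def)
qed

lemma KS_universal_optimal:
  assumes "computable2 V"
  shows "\<exists>c::nat. \<forall>x y. KS universal y x \<le> KS V y x + enat c"
proof -
  obtain f where f: "\<And>p x y. V p x = Some y \<longleftrightarrow> eval f [enc p, enc x] (enc y)"
    using assms unfolding computable2_def by blast
  have "KS universal y x \<le> KS V y x + enat (rf_code f + 2)" for x y
    by (rule KS_le_by_translation[where \<tau> = "\<lambda>p. (x \<noteq> [True]) # replicate (rf_code f) True @ False # p"])
      (simp_all add: f universal_simulates)
  then show ?thesis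
    by blast
qed

theorem proposition1:
  shows "\<exists>U. computable2 U
           \<and> (\<forall>V. computable2 V \<longrightarrow> (\<exists>c::nat. \<forall>x y. KS U y x \<le> KS V y x + enat c))
           \<and> (\<exists>x y. E U x y = \<infinity>)"
  using computable2_universal KS_universal_optimal E_universal_Nil_True by blast

end
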